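(* Let $R$ be the holistic system robustness random variable (defined in the context), with distribution $\pi_R$, so that $\mathbb{P}_{\pi_R}[-R\le a]=1$. Let $\alpha\in(0,1]$ and define \[ L(x,\mu,t)=t\left(\mu+\frac{1}{\alpha}\max\left\{\frac{x}{t}-\mu,0\right\}\right),\qquad u_b(\mu,t)=L(a,\mu,t). \] For $N$ independent samples $r_1,\dots,r_N$ of $R$, let $\zeta^*_N(\mu,t)=\max_{1\le k\le N}L(-r_k,\mu,t)$. Then for all $\epsilon\in[0,1]$, \[ \mathbb{P}^N_{\pi_R}\left[r^*_C\triangleq\inf_{\mu\in\mathbb{R},\ t>0}\zeta^*_N(\mu,t)(1-\epsilon)+u_b(\mu,t)\epsilon\ \ge\ \mathrm{CVaR}_\alpha(-R)\right]\ge 1-(1-\epsilon)^N. \]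
   Context: System setting: $\dot x = f(x,u)+\xi$, $x\in\mathcal{X}\subset\mathbb{R}^n$, $u=U(x,\theta)\in\mathcal{U}\subset\mathbb{R}^m$, $\theta\in\Theta\subset\mathbb{R}^p$ a parameter fixed along a trajectory, and $\xi$ stochastic noise with unknown distribution $\pi_\xi(x,u,t)$. $x^\theta$ denotes the resulting closed-loop state signal in $\mathcal{S}=\{s:\mathbb{R}_{\ge0}\to\mathbb{R}^n\}$ from an initial condition $x_0\in\mathcal{X}_0\subseteq\mathcal{X}$. A robustness metric is a function $\rho:\mathcal{S}\to[-a,b]$ with $a,b>0$ such that $\rho(s)\ge0$ only for signals exhibiting desired properties. The holistic system robustness $R$ is the scalar random variable whose samples are $r=\rho(x^\theta)$, where $(x_0,\theta)$ is sampled uniformly from $\mathcal{X}_0\times\Theta$ (and the trajectory is subject to the noise). Conditional-Value-at-Risk: $\mathrm{CVaR}_\alpha(Z)=\inf_{z\in\mathbb{R}} z+\frac{\mathbb{E}[\max(Z-z,0)]}{\alpha}$. $\zeta^*_N(\mu,t)$ is the solution of $\min_\zeta\zeta$ s.t. $\zeta\ge L(-r_i,\mu,t)$ for all $i$; $\mathbb{P}^N_{\pi_R}$ is the $N$-fold product measure of the i.i.d. sample. *)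

theory Defs
  imports "HOL-Probability.Probability"
begin

definition CVaR :: "real \<Rightarrow> 'a measure \<Rightarrow> ('a \<Rightarrow> real) \<Rightarrow> real" where
  "CVaR \<alpha> M Z = (INF z::real. z + (\<integral>x. max (Z x - z) 0 \<partial>M) / \<alpha>)"

definition Lfun :: "real \<Rightarrow> real \<Rightarrow> real \<Rightarrow> real \<Rightarrow> real" where
  "Lfun \<alpha> x \<mu> t = t * (\<mu> + (1 / \<alpha>) * max (x / t - \<mu>) 0)"

definition zeta_star :: "real \<Rightarrow> nat \<Rightarrow> (nat \<Rightarrow> real) \<Rightarrow> real \<Rightarrow> real \<Rightarrow> real" where
  "zeta_star \<alpha> N r \<mu> t = Max ((\<lambda>k. Lfun \<alpha> (- r k) \<mu> t) ` {..<N})"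

definition r_C :: "real \<Rightarrow> real \<Rightarrow> real \<Rightarrow> nat \<Rightarrow> (nat \<Rightarrow> real) \<Rightarrow> real" where
  "r_C \<alpha> a \<epsilon> N r = (INF p \<in> {p :: real \<times> real. snd p > 0}.
      zeta_star \<alpha> N r (fst p) (snd p) * (1 - \<epsilon>) + Lfun \<alpha> a (fst p) (snd p) * \<epsilon>)"

end

theory Submission
  imports Defs
begin

(* Let q be an \<epsilon>-quantile of R, i.e. P(R < q) \<le> \<epsilon> \<le> P(R \<le> q). By the Rockafellar-Uryasev
   formula CVaR_\<alpha>(Z) = inf_z E[z + (Z - z)^+ / \<alpha>] and since -R \<le> a, CVaR_\<alpha>(-R) is at most the CVaR
   of the two-point law with mass 1 - \<epsilon> at -q and \<epsilon> at a. Substituting z = t \<mu> shows that r*_C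
   is the CVaR of the two-point law with mass 1 - \<epsilon> at the largest sample loss max_k (-r_k) and
   \<epsilon> at a, which is monotone in that loss. Hence r*_C \<ge> CVaR_\<alpha>(-R) as soon as some sample
   satisfies r_k \<le> q, and all N samples exceed q with probability P(R > q)^N \<le> (1 - \<epsilon>)^N. *)

definition cvar_loss :: "real \<Rightarrow> real \<Rightarrow> real \<Rightarrow> real" where
  "cvar_loss \<alpha> z x = z + max (x - z) 0 / \<alpha>"

definition CVaR_two_point :: "real \<Rightarrow> real \<Rightarrow> real \<Rightarrow> real \<Rightarrow> real" where
  "CVaR_two_point \<alpha> a \<epsilon> m = (INF z. cvar_loss \<alpha> z m * (1 - \<epsilon>) + cvar_loss \<alpha> z a * \<epsilon>)"

lemma Lfun_eq_cvar_loss: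
  assumes "t > 0"
  shows "Lfun \<alpha> x \<mu> t = cvar_loss \<alpha> (t * \<mu>) x"
proof -
  have "t * max (x / t - \<mu>) 0 = max (x - t * \<mu>) 0"
    using assms by (simp add: max_def field_simps)
  then show ?thesis
    unfolding Lfun_def cvar_loss_def by (simp add: algebra_simps)
qed

lemma mono_cvar_loss: "\<alpha> > 0 \<Longrightarrow> mono (cvar_loss \<alpha> z)"
  unfolding cvar_loss_def by (intro monoI add_left_mono divide_right_mono) auto

lemma cvar_loss_ge:
  assumes "0 < \<alpha>" "\<alpha> \<le> 1"
  shows "x \<le> cvar_loss \<alpha> z x"
proof -
  have "max (x - z) 0 \<le> max (x - z) 0 / \<alpha>"
    using assms by (simp add: le_divide_eq mult_left_le)
  then show ?thesis
    unfolding cvar_loss_def by linarith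
qed

lemma zeta_star_eq_cvar_loss_Max:
  assumes "N > 0" "t > 0" "\<alpha> > 0"
  shows "zeta_star \<alpha> N r \<mu> t = cvar_loss \<alpha> (t * \<mu>) (Max ((\<lambda>k. - r k) ` {..<N}))"
proof -
  have "cvar_loss \<alpha> (t * \<mu>) (Max ((\<lambda>k. - r k) ` {..<N}))
      = Max (cvar_loss \<alpha> (t * \<mu>) ` (\<lambda>k. - r k) ` {..<N})"
    using assms by (intro mono_Max_commute mono_cvar_loss) auto
  then show ?thesis
    unfolding zeta_star_def using assms by (simp add: Lfun_eq_cvar_loss image_image)
qed

lemma r_C_eq_CVaR_two_point_Max:
  assumes "N > 0" "\<alpha> > 0"
  shows "r_C \<alpha> a \<epsilon> N r = CVaR_two_point \<alpha> a \<epsilon> (Max ((\<lambda>k. - r k) ` {..<N}))"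
proof -
  define g where "g z = cvar_loss \<alpha> z (Max ((\<lambda>k. - r k) ` {..<N})) * (1 - \<epsilon>) + cvar_loss \<alpha> z a * \<epsilon>"
    for z
  let ?P = "{p :: real \<times> real. snd p > 0}"
  have "(\<lambda>p. snd p * fst p) ` ?P = UNIV"
    by (auto intro!: image_eqI[where x = "(_, 1)"])
  then have "(INF z. g z) = (INF p\<in>?P. g (snd p * fst p))"
    by (metis image_image)
  then show ?thesis
    unfolding r_C_def CVaR_two_point_def g_def
    using assms by (simp add: zeta_star_eq_cvar_loss_Max Lfun_eq_cvar_loss)
qed

lemma mono_CVaR_two_point:
  assumes "0 < \<alpha>" "\<alpha> \<le> 1" "0 \<le> \<epsilon>" "\<epsilon> \<le> 1"
  shows "mono (CVaR_two_point \<alpha> a \<epsilon>)"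
proof (rule monoI)
  fix m m' :: real
  assume "m \<le> m'"
  have "bdd_below (range (\<lambda>z. cvar_loss \<alpha> z m * (1 - \<epsilon>) + cvar_loss \<alpha> z a * \<epsilon>))"
    using assms cvar_loss_ge[OF assms(1,2)]
    by (intro bdd_belowI2[of _ "m * (1 - \<epsilon>) + a * \<epsilon>"] add_mono mult_right_mono) auto
  moreover have "cvar_loss \<alpha> z m \<le> cvar_loss \<alpha> z m'" for z
    using mono_cvar_loss[OF assms(1)] \<open>m \<le> m'\<close> by (rule monoD)
  ultimately show "CVaR_two_point \<alpha> a \<epsilon> m \<le> CVaR_two_point \<alpha> a \<epsilon> m'"
    unfolding CVaR_two_point_def
  proof (intro cINF_mono)
    fix z
    show "\<exists>z'\<in>UNIV. cvar_loss \<alpha> z' m * (1 - \<epsilon>) + cvar_loss \<alpha> z' a * \<epsilon>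
        \<le> cvar_loss \<alpha> z m' * (1 - \<epsilon>) + cvar_loss \<alpha> z a * \<epsilon>"
      using assms \<open>cvar_loss \<alpha> z m \<le> cvar_loss \<alpha> z m'\<close>
      by (intro bexI[of _ z] add_right_mono mult_right_mono) auto
  qed auto
qed

lemma CVaR_two_point_le_r_C:
  assumes "k < N" "r k \<le> q" "0 < \<alpha>" "\<alpha> \<le> 1" "0 \<le> \<epsilon>" "\<epsilon> \<le> 1"
  shows "CVaR_two_point \<alpha> a \<epsilon> (- q) \<le> r_C \<alpha> a \<epsilon> N r"
proof -
  have "- q \<le> - r k"
    using assms(2) by simp
  also have "\<dots> \<le> Max ((\<lambda>k. - r k) ` {..<N})"
    using assms(1) by (intro Max_ge) auto
  finally show ?thesis
    using mono_CVaR_two_point[OF assms(3-6)] assms(1,3)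
    by (simp add: r_C_eq_CVaR_two_point_Max monoD)
qed

lemma measurable_r_C:
  assumes "sets M = sets borel" "N > 0" "0 < \<alpha>" "\<alpha> \<le> 1" "0 \<le> \<epsilon>" "\<epsilon> \<le> 1"
  shows "r_C \<alpha> a \<epsilon> N \<in> borel_measurable (PiM {..<N} (\<lambda>_. M))"
proof -
  have [measurable]: "CVaR_two_point \<alpha> a \<epsilon> \<in> borel_measurable borel"
    using mono_CVaR_two_point[OF assms(3-6)] by (rule borel_measurable_mono)
  have [measurable_cong]: "sets M = sets borel"
    by (fact assms(1))
  have "r_C \<alpha> a \<epsilon> N = (\<lambda>r. CVaR_two_point \<alpha> a \<epsilon> (Max ((\<lambda>k. - r k) ` {..<N})))"
    using assms(2,3) by (simp add: r_C_eq_CVaR_two_point_Max fun_eq_iff)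
  then show ?thesis
    by simp
qed

lemma (in real_distribution) quantile_exists:
  assumes "0 < \<epsilon>" "\<epsilon> \<le> cdf M s"
  obtains q where "measure M {..<q} \<le> \<epsilon>" "\<epsilon> \<le> cdf M q"
proof -
  define Q where "Q = {x. \<epsilon> \<le> cdf M x}"
  have "\<forall>\<^sub>F x in at_bot. cdf M x < \<epsilon>"
    using cdf_lim_at_bot assms(1) by (rule order_tendstoD)
  then obtain x\<^sub>0 where "\<And>x. x \<le> x\<^sub>0 \<Longrightarrow> cdf M x < \<epsilon>"
    unfolding eventually_at_bot_linorder by blast
  then have "bdd_below Q"
    unfolding Q_def by (intro bdd_belowI[of _ x\<^sub>0]) (meson linorder_not_le less_imp_le mem_Collect_eq)
  moreover have "s \<in> Q"
    unfolding Q_def using assms(2) by simp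
  ultimately have below: "cdf M x < \<epsilon>" if "x < Inf Q" for x
    using that cInf_lower unfolding Q_def by (metis mem_Collect_eq not_le)
  have above: "\<epsilon> \<le> cdf M x" if "Inf Q < x" for x
  proof -
    obtain y where "y \<in> Q" "y < x"
      using \<open>s \<in> Q\<close> \<open>Inf Q < x\<close> cInf_lessD by blast
    then show ?thesis
      unfolding Q_def using cdf_nondecreasing by (meson less_imp_le mem_Collect_eq order_trans)
  qed
  show ?thesis
  proof
    show "measure M {..<Inf Q} \<le> \<epsilon>"
      by (rule tendsto_upperbound[OF cdf_at_left])
        (auto intro!: eventually_at_leftI[of "Inf Q - 1"] less_imp_le below)
    show "\<epsilon> \<le> cdf M (Inf Q)"
      by (rule tendsto_lowerbound[OF cdf_is_right_cont[unfolded continuous_within]])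
        (auto intro!: eventually_at_rightI[of _ "Inf Q + 1"] above)
  qed
qed

lemma (in real_distribution) quantile_exists_in_support:
  assumes "AE x in M. c \<le> x \<and> x \<le> d" "0 < \<epsilon>" "\<epsilon> \<le> 1"
  obtains q where "c \<le> q" "measure M {..<q} \<le> \<epsilon>" "\<epsilon> \<le> cdf M q"
proof -
  have "cdf M d = 1"
    using assms(1) prob_Collect_eq_1[of "\<lambda>x. x \<le> d"] by (simp add: cdf_def atMost_def)
  then obtain q where q: "measure M {..<q} \<le> \<epsilon>" "\<epsilon> \<le> cdf M q"
    using quantile_exists assms(2,3) by metis
  have "c \<le> q"
  proof (rule ccontr)
    assume "\<not> c \<le> q"
    then have "AE x in M. \<not> x \<le> q"
      using assms(1) by (auto elim: eventually_mono)
    then have "cdf M q = 0"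
      using prob_Collect_eq_0[of "\<lambda>x. x \<le> q"] by (simp add: cdf_def atMost_def)
    then show False
      using q(2) assms(2) by simp
  qed
  with q show ?thesis
    using that by blast
qed

lemma (in prob_space) CVaR_le_integral_cvar_loss:
  assumes "integrable M Z" "0 < \<alpha>" "\<alpha> \<le> 1"
  shows "CVaR \<alpha> M Z \<le> (\<integral>x. cvar_loss \<alpha> z (Z x) \<partial>M)"
proof -
  have objective: "y + (\<integral>x. max (Z x - y) 0 \<partial>M) / \<alpha> = (\<integral>x. cvar_loss \<alpha> y (Z x) \<partial>M)" for y
    using assms(1) by (simp add: cvar_loss_def prob_space)
  have "(\<integral>x. Z x \<partial>M) \<le> (\<integral>x. cvar_loss \<alpha> y (Z x) \<partial>M)" for y
    using assms by (intro integral_mono cvar_loss_ge) (auto simp: cvar_loss_def)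
  then have "bdd_below (range (\<lambda>y. y + (\<integral>x. max (Z x - y) 0 \<partial>M) / \<alpha>))"
    by (intro bdd_belowI2[of _ "\<integral>x. Z x \<partial>M"]) (simp add: objective)
  then show ?thesis
    unfolding CVaR_def objective[symmetric] by (rule cINF_lower) simp
qed

lemma (in prob_space) integral_mono_fun_le_two_point:
  fixes Z :: "'a \<Rightarrow> real"
  assumes "mono f" "integrable M (\<lambda>x. f (Z x))" "Z \<in> borel_measurable M"
    and "AE x in M. Z x \<le> a" "q \<le> a" "prob {x \<in> space M. q < Z x} \<le> \<epsilon>"
  shows "(\<integral>x. f (Z x) \<partial>M) \<le> f q * (1 - \<epsilon>) + f a * \<epsilon>"
proof -
  define A where "A = {x \<in> space M. q < Z x}"
  define D where "D = f a - f q"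
  have "A \<in> events"
    unfolding A_def using assms(3) by measurable
  have "0 \<le> D"
    unfolding D_def using assms(1,5) by (simp add: monoD)
  have "(\<integral>x. f (Z x) \<partial>M) \<le> (\<integral>x. f q + D * indicator A x \<partial>M)"
  proof (rule integral_mono_AE)
    show "integrable M (\<lambda>x. f q + D * indicator A x)"
      using \<open>A \<in> events\<close> by (simp add: less_top[symmetric])
    show "AE x in M. f (Z x) \<le> f q + D * indicator A x"
      using assms(4) AE_space
    proof eventually_elim
      case (elim x)
      then show ?case
        using assms(1) \<open>0 \<le> D\<close> unfolding A_def D_def
        by (cases "q < Z x") (auto simp: indicator_def monoD)
    qed
  qed fact
  also have "\<dots> = f q + D * prob A"
    using \<open>A \<in> events\<close> by (simp add: prob_space less_top[symmetric])
  also have "\<dots> \<le> f q + D * \<epsilon>"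
    using assms(6) \<open>0 \<le> D\<close> unfolding A_def by (simp add: mult_left_mono)
  also have "\<dots> = f q * (1 - \<epsilon>) + f a * \<epsilon>"
    unfolding D_def by algebra
  finally show ?thesis .
qed

lemma (in prob_space) CVaR_le_CVaR_two_point:
  assumes "integrable M Z" "AE x in M. Z x \<le> a" "q \<le> a" "prob {x \<in> space M. q < Z x} \<le> \<epsilon>"
    and "0 < \<alpha>" "\<alpha> \<le> 1"
  shows "CVaR \<alpha> M Z \<le> CVaR_two_point \<alpha> a \<epsilon> q"
  unfolding CVaR_two_point_def
proof (rule cINF_greatest)
  fix z
  have "integrable M (\<lambda>x. cvar_loss \<alpha> z (Z x))"
    using assms(1) by (simp add: cvar_loss_def)
  have "CVaR \<alpha> M Z \<le> (\<integral>x. cvar_loss \<alpha> z (Z x) \<partial>M)"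
    using assms(1,5,6) by (rule CVaR_le_integral_cvar_loss)
  also have "\<dots> \<le> cvar_loss \<alpha> z q * (1 - \<epsilon>) + cvar_loss \<alpha> z a * \<epsilon>"
    using assms \<open>integrable M (\<lambda>x. cvar_loss \<alpha> z (Z x))\<close>
    by (intro integral_mono_fun_le_two_point mono_cvar_loss) auto
  finally show "CVaR \<alpha> M Z \<le> cvar_loss \<alpha> z q * (1 - \<epsilon>) + cvar_loss \<alpha> z a * \<epsilon>" .
qed simp

lemma (in prob_space) prob_PiM_some_coordinate_in:
  assumes "finite I" "A \<in> events"
  shows "measure (PiM I (\<lambda>_. M)) {r \<in> space (PiM I (\<lambda>_. M)). \<exists>i\<in>I. r i \<in> A}
    = 1 - (1 - prob A) ^ card I"
proof -
  interpret product: finite_product_prob_space "\<lambda>_. M" I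
    using assms(1) by unfold_locales
  have "{r \<in> space (PiM I (\<lambda>_. M)). \<exists>i\<in>I. r i \<in> A}
      = space (PiM I (\<lambda>_. M)) - PiE I (\<lambda>_. space M - A)"
    by (auto simp: space_PiM)
  moreover have "measure (PiM I (\<lambda>_. M)) (PiE I (\<lambda>_. space M - A)) = (1 - prob A) ^ card I"
    using assms(2) by (simp add: product.finite_measure_PiM_emb prob_compl)
  ultimately show ?thesis
    using assms(2) by (simp add: product.prob_compl sets_PiM_I_finite[OF assms(1)])
qed

theorem corollary5:
  fixes M :: "real measure" and a b \<alpha> \<epsilon> :: real and N :: nat
  assumes "prob_space M"
    and "sets M = sets borel"
    and "a > 0" and "b > 0"
    and "AE r in M. - a \<le> r \<and> r \<le> b"
    and "0 < \<alpha>" and "\<alpha> \<le> 1"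
    and "0 \<le> \<epsilon>" and "\<epsilon> \<le> 1"
  shows "measure (PiM {..<N} (\<lambda>_. M))
           {r \<in> space (PiM {..<N} (\<lambda>_. M)). r_C \<alpha> a \<epsilon> N r \<ge> CVaR \<alpha> M (\<lambda>x. - x)}
         \<ge> 1 - (1 - \<epsilon>) ^ N"
proof (cases "N = 0 \<or> \<epsilon> = 0")
  case False
  then have "N > 0" "\<epsilon> > 0"
    using assms(8) by auto
  interpret real_distribution M
    using assms(1,2) by (simp add: real_distribution_def real_distribution_axioms_def)
  let ?PP = "PiM {..<N} (\<lambda>_. M)"
  interpret samples: prob_space ?PP
    by (intro prob_space_PiM prob_space_axioms)
  let ?S = "{r \<in> space ?PP. CVaR \<alpha> M (\<lambda>x. - x) \<le> r_C \<alpha> a \<epsilon> N r}"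
  obtain q where q: "- a \<le> q" "measure M {..<q} \<le> \<epsilon>" "\<epsilon> \<le> cdf M q"
    using quantile_exists_in_support assms(5,9) \<open>\<epsilon> > 0\<close> by metis
  let ?E = "{r \<in> space ?PP. \<exists>k\<in>{..<N}. r k \<in> {..q}}"
  have "integrable M (\<lambda>x. - x)"
    using assms(5) by (intro integrable_const_bound[where B = "max a b"]) (auto elim: eventually_mono)
  then have "CVaR \<alpha> M (\<lambda>x. - x) \<le> CVaR_two_point \<alpha> a \<epsilon> (- q)"
    using assms(5-7) q(1,2)
    by (intro CVaR_le_CVaR_two_point) (auto elim: eventually_mono simp: Collect_neg_eq lessThan_def)
  then have "?E \<subseteq> ?S"
    using CVaR_two_point_le_r_C[OF _ _ assms(6-9)] by (force simp: order_trans)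
  have [measurable]: "r_C \<alpha> a \<epsilon> N \<in> borel_measurable ?PP"
    using assms(2) \<open>N > 0\<close> assms(6-9) by (rule measurable_r_C)
  have "1 - (1 - \<epsilon>) ^ N \<le> 1 - (1 - cdf M q) ^ N"
    using q(3) cdf_bounded_prob by (simp add: power_mono)
  also have "\<dots> = measure ?PP ?E"
    using prob_PiM_some_coordinate_in[of "{..<N}" "{..q}"] by (simp add: cdf_def)
  also have "\<dots> \<le> measure ?PP ?S"
    using \<open>?E \<subseteq> ?S\<close>
    by (intro samples.finite_measure_mono) measurable
  finally show ?thesis .
qed (auto simp: measure_nonneg)

end
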